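(* Let $f=x_0^3+x_1^3+x_2^3-x_3^2(3\lambda_0x_0+3\lambda_1x_1+3\lambda_2x_2-x_3)$ with $\lambda_0,\lambda_1,\lambda_2\in\mathbb{C}^*$ and $2(\lambda_0^{3/2}+\lambda_1^{3/2}+\lambda_2^{3/2})\neq1$ (for every choice of square roots). Then the scheme-theoretic intersection $H(f)\cap X_2$ is supported at the $7$ points $x_0^2-\lambda_0x_3^2,\ x_1^2-\lambda_1x_3^2,\ x_2^2-\lambda_2x_3^2,\ \lambda_1x_0^2-\lambda_0x_1^2,\ \lambda_2x_0^2-\lambda_0x_2^2,\ \lambda_2x_1^2-\lambda_1x_2^2,\ x_3(\lambda_0x_0+\lambda_1x_1+\lambda_2x_2-x_3)$, where the first three are double points and the remaining four are simple points. In particular $f$ lies on the Hessian discriminant.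
   Context: $\mathbb{P}^9$ denotes the projective space of quadratic forms in $x_0,\dots,x_3$; $X_2\subset\mathbb{P}^9$ is the variety of quadratic forms of rank $\le2$ (defined by the $3\times3$ minors of the symmetric coefficient matrix), of degree $10$. For a cubic form $f$ whose four partial derivatives are linearly independent, $H(f)\subset\mathbb{P}^9$ is the projective $3$-plane spanned by $\partial f/\partial x_0,\dots,\partial f/\partial x_3$. $f$ lies on the Hessian discriminant iff $H(f)\cap X_2$ does not consist of $10$ reduced points. *)

theory Defs
  imports Complex_Main "HOL-Library.Poly_Mapping" "HOL-Library.Numeral_Type"
begin

text \<open>Polynomials in four variables over the complex numbers, variables indexed by the
  four-element type 4.  The same type is used both for forms in x0..x3 and for polynomials
  in the homogeneous coordinates a0..a3 of the 3-plane H(f).\<close>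

type_synonym mpoly = "(4 \<Rightarrow>\<^sub>0 nat) \<Rightarrow>\<^sub>0 complex"

definition mconst :: "complex \<Rightarrow> mpoly" where
  "mconst c = Poly_Mapping.single 0 c"

definition mvar :: "4 \<Rightarrow> mpoly" where
  "mvar i = Poly_Mapping.single (Poly_Mapping.single i 1) 1"

definition meval :: "(4 \<Rightarrow> complex) \<Rightarrow> mpoly \<Rightarrow> complex" where
  "meval a p = (\<Sum>m\<in>Poly_Mapping.keys p. Poly_Mapping.lookup p m * (\<Prod>i\<in>(UNIV::4 set). a i ^ Poly_Mapping.lookup (m::4 \<Rightarrow>\<^sub>0 nat) i))"

definition mpderiv :: "4 \<Rightarrow> mpoly \<Rightarrow> mpoly" where
  "mpderiv i p = (\<Sum>m\<in>Poly_Mapping.keys p.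
      Poly_Mapping.single (m - Poly_Mapping.single i 1) (of_nat (Poly_Mapping.lookup m i) * Poly_Mapping.lookup p m))"

text \<open>Symmetric coefficient matrix of a quadratic form q = sum_{i,j} M i j x_i x_j.\<close>
definition qmat :: "mpoly \<Rightarrow> 4 \<Rightarrow> 4 \<Rightarrow> complex" where
  "qmat q i j = (if i = j then Poly_Mapping.lookup q (Poly_Mapping.single i 2)
                 else Poly_Mapping.lookup q (Poly_Mapping.single i 1 + Poly_Mapping.single j 1) / 2)"

definition others :: "4 \<Rightarrow> 4 list" where
  "others r = filter (\<lambda>k. k \<noteq> r) [0, 1, 2, 3]"

definition det3 :: "(4 \<Rightarrow> 4 \<Rightarrow> 'a::comm_ring_1) \<Rightarrow> 4 list \<Rightarrow> 4 list \<Rightarrow> 'a" where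
  "det3 A rs cs =
    (let r0 = rs!0; r1 = rs!1; r2 = rs!2; c0 = cs!0; c1 = cs!1; c2 = cs!2 in
       A r0 c0 * (A r1 c1 * A r2 c2 - A r1 c2 * A r2 c1)
     - A r0 c1 * (A r1 c0 * A r2 c2 - A r1 c2 * A r2 c0)
     + A r0 c2 * (A r1 c0 * A r2 c1 - A r1 c1 * A r2 c0))"

definition minor3 :: "(4 \<Rightarrow> 4 \<Rightarrow> 'a::comm_ring_1) \<Rightarrow> 4 \<Rightarrow> 4 \<Rightarrow> 'a" where
  "minor3 A r c = det3 A (others r) (others c)"

definition rank_le2 :: "mpoly \<Rightarrow> bool" where
  "rank_le2 q \<longleftrightarrow> (\<forall>r c. minor3 (qmat q) r c = 0)"

definition Qpoly :: "mpoly \<Rightarrow> (4 \<Rightarrow> complex) \<Rightarrow> mpoly" where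
  "Qpoly f a = (\<Sum>k\<in>UNIV. mconst (a k) * mpderiv k f)"

definition Hspace :: "mpoly \<Rightarrow> mpoly set" where
  "Hspace f = range (Qpoly f)"

text \<open>Set of (affine representatives of) points of H(f) \<inter> X_2.\<close>
definition hess_points :: "mpoly \<Rightarrow> mpoly set" where
  "hess_points f = {Q. Q \<in> Hspace f \<and> Q \<noteq> 0 \<and> rank_le2 Q}"

definition proj_eq :: "mpoly \<Rightarrow> mpoly \<Rightarrow> bool" where
  "proj_eq P Q \<longleftrightarrow> (\<exists>c. c \<noteq> 0 \<and> Q = mconst c * P)"

text \<open>Scheme structure: restricting the 3x3 minors to H(f), with coordinates a0..a3, gives
  homogeneous polynomials in a: the entries of the coefficient matrix are linear forms in a.\<close>
definition hmat :: "mpoly \<Rightarrow> 4 \<Rightarrow> 4 \<Rightarrow> mpoly" where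
  "hmat f i j = (\<Sum>k\<in>UNIV. mconst (qmat (mpderiv k f) i j) * mvar k)"

definition hess_minors :: "mpoly \<Rightarrow> mpoly set" where
  "hess_minors f = {minor3 (hmat f) r c | r c. True}"

definition ideal_gen :: "mpoly set \<Rightarrow> mpoly set" where
  "ideal_gen G = {p. \<exists>F h. finite F \<and> F \<subseteq> G \<and> p = (\<Sum>g\<in>F. h g * g)}"

definition mpow :: "(4 \<Rightarrow> complex) \<Rightarrow> nat \<Rightarrow> mpoly set" where
  "mpow q N = {\<Prod>i\<in>UNIV. (mvar i - mconst (q i)) ^ e i | e. (\<Sum>i\<in>UNIV. e i) = N}"

definition quot_dim :: "mpoly set \<Rightarrow> nat \<Rightarrow> bool" where
  "quot_dim K k \<longleftrightarrow> (\<exists>B. finite B \<and> card B = k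
      \<and> (\<forall>p. \<exists>c. p - (\<Sum>b\<in>B. mconst (c b) * b) \<in> K)
      \<and> (\<forall>c. (\<Sum>b\<in>B. mconst (c b) * b) \<in> K \<longrightarrow> (\<forall>b\<in>B. c b = 0)))"

text \<open>Length of the local ring of C[a]/(J) at the point q:
  dim_C C[a]/(J + m_q^N) for all sufficiently large N.\<close>
definition local_length :: "mpoly set \<Rightarrow> (4 \<Rightarrow> complex) \<Rightarrow> nat \<Rightarrow> bool" where
  "local_length J q k \<longleftrightarrow> (\<exists>N0. \<forall>N\<ge>N0. quot_dim (ideal_gen (J \<union> mpow q N)) k)"

text \<open>Length at a projective point [a] of the scheme defined by homogeneous J, computed in
  the affine chart a_i = 1 (any chart with a_i \<noteq> 0).\<close>
definition proj_length :: "mpoly set \<Rightarrow> (4 \<Rightarrow> complex) \<Rightarrow> nat \<Rightarrow> bool" where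
  "proj_length J a k \<longleftrightarrow>
     (\<forall>i. a i \<noteq> 0 \<longrightarrow> local_length (insert (mvar i - 1) J) (\<lambda>j. a j / a i) k)"

definition hess_mult :: "mpoly \<Rightarrow> mpoly \<Rightarrow> nat \<Rightarrow> bool" where
  "hess_mult f Q k \<longleftrightarrow> (\<forall>a. Qpoly f a = Q \<longrightarrow> proj_length (hess_minors f) a k)"

definition hessian_discriminant :: "mpoly \<Rightarrow> bool" where
  "hessian_discriminant f \<longleftrightarrow> \<not> (\<exists>S. finite S \<and> card S = 10 \<and> S \<subseteq> hess_points f
      \<and> (\<forall>P\<in>S. \<forall>Q\<in>S. proj_eq P Q \<longrightarrow> P = Q)
      \<and> (\<forall>Q\<in>hess_points f. \<exists>P\<in>S. proj_eq P Q)
      \<and> (\<forall>P\<in>S. hess_mult f P 1))"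

end

theory Submission
  imports Defs
begin

(* For a point a of P^3 the quadric sum_k a_k df/dx_k has coefficient matrix 3 M(a), where M(a) is
   diagonal in x0, x1, x2 and bordered by lam in the x3 row and column.  The 3x3 minors of M(a)
   generate the same ideal as the ten polynomials a0 a1 a2, a_i a_j a3, a_i a3^2 and
   a_i a_j (lam0 a0 + lam1 a1 + lam2 a2) (i, j < 3), whose zero set consists of the seven points
   of the theorem.  In the affine chart a_i = 1 these relations make every coordinate constant,
   except at the points e0, e1, e2, where a3 is only forced to square to zero; evaluation at the
   point, and at the point moved along a3 by a dual-number infinitesimal, shows that the local
   quotients have dimension exactly 1, respectively 2.  Seven points cannot be ten reduced ones,
   so f lies on the Hessian discriminant. *)

lemma cases_4: "(i::4) = 0 \<or> i = 1 \<or> i = 2 \<or> i = 3"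
proof (induct i)
  case (of_int z)
  then have "z = 0 \<or> z = 1 \<or> z = 2 \<or> z = 3" by fastforce
  then show ?case by auto
qed

lemma UNIV_4: "(UNIV::4 set) = {0, 1, 2, 3}"
  using cases_4 by auto

lemma sum_UNIV_4: "(\<Sum>i\<in>UNIV. g i) = g (0::4) + g 1 + g 2 + g 3"
  unfolding UNIV_4 by (simp add: ac_simps)

lemma distinct_4_cases:
  "distinct [i, j, k, 3::4] \<Longrightarrow>
    (i, j, k) \<in> {(0, 1, 2), (0, 2, 1), (1, 0, 2), (1, 2, 0), (2, 0, 1), (2, 1, 0)}"
  using cases_4[of i] cases_4[of j] cases_4[of k] by auto

lemma distinct_4_exhaust: "distinct [i, j, k, 3::4] \<Longrightarrow> m = i \<or> m = j \<or> m = k \<or> m = 3"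
  using distinct_4_cases[of i j k] cases_4[of m] by auto

lemma obtain_distinct_4:
  assumes "i \<noteq> (3::4)"
  obtains j k where "distinct [i, j, k, 3]"
  using cases_4[of i] assms that[of 1 2] that[of 0 2] that[of 0 1] by auto

lemma fun_eq_4I:
  assumes "g 0 = h 0" "g 1 = h 1" "g 2 = h 2" "g 3 = h 3"
  shows "g = (h :: 4 \<Rightarrow> 'a)"
proof
  fix i :: 4
  from cases_4[of i] show "g i = h i" using assms by (elim disjE) simp_all
qed

lemma mconst_0 [simp]: "mconst 0 = 0"
  by (simp add: mconst_def)

lemma mconst_1 [simp]: "mconst 1 = 1"
  by (simp add: mconst_def)

lemma mconst_add: "mconst (a + b) = mconst a + mconst b"
  by (simp add: mconst_def single_add)

lemma mconst_diff: "mconst (a - b) = mconst a - mconst b"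
  by (simp add: mconst_def single_diff)

lemma mconst_uminus: "mconst (- a) = - mconst a"
  by (simp add: mconst_def single_uminus)

lemma mconst_mult: "mconst (a * b) = mconst a * mconst b"
  by (simp add: mconst_def mult_single)

lemma mconst_power: "mconst (a ^ n) = mconst a ^ n"
  by (induct n) (simp_all add: mconst_mult)

lemma mconst_numeral [simp]: "mconst (numeral n) = numeral n"
  by (simp add: mconst_def)

lemma mconst_inverse_mult: "c \<noteq> 0 \<Longrightarrow> mconst (inverse c) * mconst c = 1"
  by (simp add: mconst_mult[symmetric])

lemma lookup_mconst_mult [simp]:
  "Poly_Mapping.lookup (mconst c * p) m = c * Poly_Mapping.lookup p m"
proof -
  have "mconst c * p = Poly_Mapping.map ((*) c) p"
    by (simp add: mconst_def mult_map_scale_conv_mult)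
  then show ?thesis by (simp add: map.rep_eq when_def)
qed

lemma mvar_power: "mvar i ^ n = Poly_Mapping.single (Poly_Mapping.single i n) 1"
  by (induct n) (simp_all add: mvar_def mult_single single_add[symmetric] add.commute)

lemma mvar_mult_mvar: "mvar i * mvar j = Poly_Mapping.single (Poly_Mapping.single i 1 + Poly_Mapping.single j 1) 1"
  by (simp add: mvar_def mult_single)

lemma one_neq_mvar: "1 \<noteq> mvar i"
proof
  assume "1 = mvar i"
  then have "Poly_Mapping.lookup (1::mpoly) 0 = Poly_Mapping.lookup (mvar i) 0" by simp
  moreover have "Poly_Mapping.single i (1::nat) \<noteq> 0"
    by (metis lookup_single_eq lookup_zero zero_neq_one)
  ultimately show False by (simp add: mvar_def lookup_single)
qed

lemma mpoly_single_induct [case_names zero single_add]: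
  assumes "P 0" "\<And>m c p. P p \<Longrightarrow> P (Poly_Mapping.single m c + p)"
  shows "P (p::mpoly)"
proof (induct p rule: update_induct)
  case (update f a b)
  then have "Poly_Mapping.update a b f = Poly_Mapping.single a b + f"
    by (intro poly_mapping_eqI) (auto simp: lookup_update lookup_add lookup_single in_keys_iff when_def)
  then show ?case using update assms(2) by simp
qed (use assms in simp)

lemma single_eq_mconst_mult_monomial:
  "Poly_Mapping.single m c = mconst c * (\<Prod>i\<in>UNIV. mvar i ^ Poly_Mapping.lookup m i)"
proof -
  have "(\<Prod>i\<in>A. mvar i ^ n i) = Poly_Mapping.single (\<Sum>i\<in>A. Poly_Mapping.single i (n i)) 1"
    if "finite A" for A and n :: "4 \<Rightarrow> nat"
    using that by (induct A rule: finite_induct) (simp_all add: mvar_power mult_single)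
  moreover have "(\<Sum>i\<in>UNIV. Poly_Mapping.single i (Poly_Mapping.lookup m i)) = m"
    by (rule poly_mapping_eqI) (simp add: lookup_sum lookup_single when_def)
  ultimately show ?thesis by (simp add: mconst_def mult_single)
qed

lemma mpoly_ring_induct [case_names mconst mvar add mult]:
  assumes mconst: "\<And>c. P (mconst c)" and mvar: "\<And>i. P (mvar i)"
    and add: "\<And>p q. P p \<Longrightarrow> P q \<Longrightarrow> P (p + q)"
    and mult: "\<And>p q. P p \<Longrightarrow> P q \<Longrightarrow> P (p * q)"
  shows "P p"
proof (induct p rule: mpoly_single_induct)
  case zero
  then show ?case using mconst[of 0] by simp
next
  case (single_add m c p)
  have power: "P (r ^ n)" if "P r" for r n
    using that by (induct n) (use mconst[of 1] mult in auto)
  have "P (\<Prod>i\<in>A. g i)" if "finite A" "\<And>i. P (g i)" for A and g :: "4 \<Rightarrow> mpoly"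
    using that by (induct A rule: finite_induct) (use mconst[of 1] mult in auto)
  then have "P (Poly_Mapping.single m c)"
    unfolding single_eq_mconst_mult_monomial using mconst mvar mult power by simp
  then show ?case using single_add add by blast
qed

section \<open>Ideals\<close>

lemma ideal_gen_0: "0 \<in> ideal_gen G"
  unfolding ideal_gen_def by (auto intro!: exI[of _ "{}"])

lemma ideal_gen_base: "g \<in> G \<Longrightarrow> g \<in> ideal_gen G"
  unfolding ideal_gen_def by (auto intro!: exI[of _ "{g}"] exI[of _ "\<lambda>_. 1"])

lemma ideal_gen_add:
  assumes "p \<in> ideal_gen G" "q \<in> ideal_gen G"
  shows "p + q \<in> ideal_gen G"
proof -
  obtain F1 h1 where F1: "finite F1" "F1 \<subseteq> G" "p = (\<Sum>g\<in>F1. h1 g * g)"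
    using assms(1) unfolding ideal_gen_def by auto
  obtain F2 h2 where F2: "finite F2" "F2 \<subseteq> G" "q = (\<Sum>g\<in>F2. h2 g * g)"
    using assms(2) unfolding ideal_gen_def by auto
  define h where "h g = (if g \<in> F1 then h1 g else 0) + (if g \<in> F2 then h2 g else 0)" for g
  have "(\<Sum>g\<in>F1 \<union> F2. (if g \<in> F1 then h1 g else 0) * g) = p"
    "(\<Sum>g\<in>F1 \<union> F2. (if g \<in> F2 then h2 g else 0) * g) = q"
    unfolding F1(3) F2(3) by (rule sum.mono_neutral_cong_right; use F1 F2 in auto)+
  then have "(\<Sum>g\<in>F1 \<union> F2. h g * g) = p + q"
    unfolding h_def distrib_right sum.distrib by simp
  then show ?thesis
    unfolding ideal_gen_def using F1 F2 by (auto intro!: exI[of _ "F1 \<union> F2"] exI[of _ h])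
qed

lemma ideal_gen_mult_left:
  assumes "p \<in> ideal_gen G"
  shows "r * p \<in> ideal_gen G"
proof -
  obtain F h where F: "finite F" "F \<subseteq> G" "p = (\<Sum>g\<in>F. h g * g)"
    using assms unfolding ideal_gen_def by auto
  then have "r * p = (\<Sum>g\<in>F. (r * h g) * g)"
    by (simp add: sum_distrib_left mult.assoc)
  then show ?thesis
    unfolding ideal_gen_def using F(1,2) by (intro CollectI exI conjI)
qed

lemma ideal_gen_mult_right: "p \<in> ideal_gen G \<Longrightarrow> p * r \<in> ideal_gen G"
  using ideal_gen_mult_left[of p G r] by (simp only: mult.commute)

lemma ideal_gen_uminus: "p \<in> ideal_gen G \<Longrightarrow> - p \<in> ideal_gen G"
  using ideal_gen_mult_left[of p G "-1"] by simp

lemma ideal_gen_diff: "p \<in> ideal_gen G \<Longrightarrow> q \<in> ideal_gen G \<Longrightarrow> p - q \<in> ideal_gen G"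
  using ideal_gen_add[of p G "- q"] ideal_gen_uminus by auto

lemma ideal_gen_mconst_cancel: "mconst c * p \<in> ideal_gen G \<Longrightarrow> c \<noteq> 0 \<Longrightarrow> p \<in> ideal_gen G"
  using ideal_gen_mult_left[of "mconst c * p" G "mconst (inverse c)"]
  by (simp add: mult.assoc[symmetric] mconst_inverse_mult)

lemma ideal_gen_cancel_unit:
  assumes "x * (mconst c + y) \<in> ideal_gen G" "y ^ N \<in> ideal_gen G" "c \<noteq> 0"
  shows "x \<in> ideal_gen G"
proof -
  define S where "S = (\<Sum>i<N. (- y) ^ (N - Suc i) * mconst c ^ i)"
  have "mconst c ^ N - (- y) ^ N = (mconst c + y) * S"
    using power_diff_sumr2[of "mconst c" N "- y"] unfolding S_def by simp
  then have "mconst (c ^ N) * x = x * (mconst c + y) * S + ((-1) ^ N * x) * y ^ N"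
    by (simp add: mconst_power power_minus[of y] algebra_simps)
  also have "\<dots> \<in> ideal_gen G"
    using ideal_gen_mult_right[OF assms(1)] ideal_gen_mult_left[OF assms(2)] by (rule ideal_gen_add)
  finally show ?thesis
    by (rule ideal_gen_mconst_cancel) (simp add: assms(3))
qed

section \<open>Evaluation in dual numbers\<close>

text \<open>Ring homomorphisms killing an ideal bound the dimension of the quotient from below.
  Evaluation at a point plus an infinitesimal tangent vector, with values in the dual numbers,
  detects quotients of dimension 2.\<close>

datatype dual = Dual (dual_re: complex) (dual_eps: complex)

lemma dual_eq_iff: "x = y \<longleftrightarrow> dual_re x = dual_re y \<and> dual_eps x = dual_eps y"
  by (cases x; cases y) auto

instantiation dual :: comm_ring_1
begin

definition "0 = Dual 0 0"
definition "1 = Dual 1 0"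
definition "x + y = Dual (dual_re x + dual_re y) (dual_eps x + dual_eps y)"
definition "x - y = Dual (dual_re x - dual_re y) (dual_eps x - dual_eps y)"
definition "- x = Dual (- dual_re x) (- dual_eps x)"
definition "x * y = Dual (dual_re x * dual_re y) (dual_re x * dual_eps y + dual_eps x * dual_re y)"

instance
  by standard (simp_all add: dual.expand zero_dual_def one_dual_def plus_dual_def minus_dual_def
      uminus_dual_def times_dual_def algebra_simps)

end

lemma dual_re_simps [simp]:
  "dual_re 0 = 0" "dual_re 1 = 1" "dual_re (x + y) = dual_re x + dual_re y"
  "dual_re (x - y) = dual_re x - dual_re y" "dual_re (- x) = - dual_re x"
  "dual_re (x * y) = dual_re x * dual_re y"
  by (simp_all add: zero_dual_def one_dual_def plus_dual_def minus_dual_def uminus_dual_def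
      times_dual_def)

lemma dual_eps_simps [simp]:
  "dual_eps 0 = 0" "dual_eps 1 = 0" "dual_eps (x + y) = dual_eps x + dual_eps y"
  "dual_eps (x - y) = dual_eps x - dual_eps y" "dual_eps (- x) = - dual_eps x"
  "dual_eps (x * y) = dual_re x * dual_eps y + dual_eps x * dual_re y"
  by (simp_all add: zero_dual_def one_dual_def plus_dual_def minus_dual_def uminus_dual_def
      times_dual_def)

lemma dual_re_power [simp]: "dual_re (x ^ n) = dual_re x ^ n"
  by (induct n) simp_all

lemma dual_re_prod: "dual_re (\<Prod>i\<in>A. y i) = (\<Prod>i\<in>A. dual_re (y i))"
  by (induct A rule: infinite_finite_induct) simp_all

lemma dual_mult_eq_0: "dual_re u = 0 \<Longrightarrow> dual_re v = 0 \<Longrightarrow> u * v = 0"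
  by (simp add: dual_eq_iff)

lemma dual_prod_power_eq_0:
  assumes "finite A" "\<And>i. i \<in> A \<Longrightarrow> dual_re (y i) = 0" "2 \<le> sum e A"
  shows "(\<Prod>i\<in>A. y i ^ e i) = 0"
  using assms
proof (induct A rule: finite_induct)
  case (insert a A)
  have prod: "(\<Prod>i\<in>insert a A. y i ^ e i) = y a ^ e a * (\<Prod>i\<in>A. y i ^ e i)"
    using insert by simp
  have ya: "dual_re (y a) = 0" using insert by simp
  consider "e a = 0" | "e a = 1" | n where "e a = Suc (Suc n)"
    by (metis One_nat_def not0_implies_Suc)
  then show ?case
  proof cases
    case 1
    then show ?thesis using insert prod by simp
  next
    case 2
    then have "1 \<le> sum e A" using insert by simp
    then obtain i where "i \<in> A" "e i \<noteq> 0" by (metis not_one_le_zero sum.neutral)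
    then have "dual_re (\<Prod>i\<in>A. y i ^ e i) = 0"
      using insert by (simp add: dual_re_prod prod_zero_iff) blast
    then show ?thesis using prod 2 ya by (simp add: dual_mult_eq_0)
  next
    case 3
    then have "y a ^ e a = 0" using dual_mult_eq_0[OF ya ya] by (simp add: mult.assoc[symmetric])
    then show ?thesis using prod by simp
  qed
qed simp

definition dual_of :: "complex \<Rightarrow> dual" where
  "dual_of c = Dual c 0"

lemma dual_of_simps [simp]:
  "dual_re (dual_of c) = c" "dual_eps (dual_of c) = 0" "dual_of 0 = 0" "dual_of 1 = 1"
  by (simp_all add: dual_of_def zero_dual_def one_dual_def)

lemma dual_of_add: "dual_of (a + b) = dual_of a + dual_of b"
  and dual_of_mult: "dual_of (a * b) = dual_of a * dual_of b"
  by (simp_all add: dual_eq_iff)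

definition dual_eval :: "(4 \<Rightarrow> dual) \<Rightarrow> mpoly \<Rightarrow> dual" where
  "dual_eval x p = (\<Sum>m\<in>Poly_Mapping.keys p.
      dual_of (Poly_Mapping.lookup p m) * (\<Prod>i\<in>UNIV. x i ^ Poly_Mapping.lookup m i))"

lemma dual_eval_single:
  "dual_eval x (Poly_Mapping.single m c) = dual_of c * (\<Prod>i\<in>UNIV. x i ^ Poly_Mapping.lookup m i)"
  by (simp add: dual_eval_def)

lemma dual_eval_0 [simp]: "dual_eval x 0 = 0"
  by (simp add: dual_eval_def)

lemma dual_eval_add: "dual_eval x (p + q) = dual_eval x p + dual_eval x q"
proof -
  let ?S = "Poly_Mapping.keys p \<union> Poly_Mapping.keys q"
  have extend: "dual_eval x r =
      (\<Sum>m\<in>?S. dual_of (Poly_Mapping.lookup r m) * (\<Prod>i\<in>UNIV. x i ^ Poly_Mapping.lookup m i))"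
    if "Poly_Mapping.keys r \<subseteq> ?S" for r
    unfolding dual_eval_def
    by (rule sum.mono_neutral_left) (use that in \<open>auto simp: in_keys_iff\<close>)
  show ?thesis
    by (simp add: extend keys_add lookup_add dual_of_add distrib_right sum.distrib)
qed

lemma dual_eval_mult: "dual_eval x (p * q) = dual_eval x p * dual_eval x q"
proof -
  have mult_single: "dual_eval x (Poly_Mapping.single m c * r) =
      dual_eval x (Poly_Mapping.single m c) * dual_eval x r" for m c r
    by (induct r rule: mpoly_single_induct)
      (simp_all add: distrib_left dual_eval_add mult_single dual_eval_single dual_of_mult
        lookup_add power_add prod.distrib algebra_simps)
  show ?thesis
    by (induct p rule: mpoly_single_induct) (simp_all add: distrib_right dual_eval_add mult_single)
qed

lemma dual_eval_uminus: "dual_eval x (- p) = - dual_eval x p"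
  using dual_eval_add[of x p "- p"] by (simp add: eq_neg_iff_add_eq_0 add.commute)

lemma dual_eval_diff: "dual_eval x (p - q) = dual_eval x p - dual_eval x q"
  using dual_eval_add[of x p "- q"] dual_eval_uminus[of x q] by simp

lemma dual_eval_mconst [simp]: "dual_eval x (mconst c) = dual_of c"
  by (simp add: mconst_def dual_eval_single)

lemma dual_eval_1 [simp]: "dual_eval x 1 = 1"
  using dual_eval_mconst[of x 1] by (simp add: dual_eq_iff)

lemma dual_eval_mvar [simp]: "dual_eval x (mvar i) = x i"
proof -
  have "(\<Prod>j\<in>UNIV. x j ^ Poly_Mapping.lookup (Poly_Mapping.single i 1) j) = x i"
    by (subst prod.remove[of _ i]) (auto simp: lookup_single when_def intro!: prod.neutral)
  then show ?thesis by (simp add: mvar_def dual_eval_single dual_eq_iff)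
qed

lemma dual_eval_power: "dual_eval x (p ^ n) = dual_eval x p ^ n"
  by (induct n) (simp_all add: dual_eval_mult)

lemma dual_eval_sum: "dual_eval x (sum g A) = (\<Sum>a\<in>A. dual_eval x (g a))"
  by (induct A rule: infinite_finite_induct) (simp_all add: dual_eval_add)

lemma dual_eval_prod: "dual_eval x (prod g A) = (\<Prod>a\<in>A. dual_eval x (g a))"
  by (induct A rule: infinite_finite_induct) (simp_all add: dual_eval_mult)

lemma dual_eval_ideal_gen:
  assumes "p \<in> ideal_gen G" "\<And>g. g \<in> G \<Longrightarrow> dual_eval x g = 0"
  shows "dual_eval x p = 0"
proof -
  obtain F h where "finite F" "F \<subseteq> G" "p = (\<Sum>g\<in>F. h g * g)"
    using assms(1) unfolding ideal_gen_def by auto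
  then show ?thesis using assms(2) by (auto simp: dual_eval_sum dual_eval_mult intro!: sum.neutral)
qed

lemma mpow_var_power: "(mvar i - mconst (q i)) ^ N \<in> mpow q N"
proof -
  let ?e = "\<lambda>j. if j = i then N else 0"
  have "(\<Prod>j\<in>UNIV. (mvar j - mconst (q j)) ^ ?e j) = (mvar i - mconst (q i)) ^ N"
    by (subst prod.remove[of _ i]) (auto intro!: prod.neutral)
  moreover have "(\<Sum>j\<in>UNIV. ?e j) = N" by simp
  ultimately show ?thesis unfolding mpow_def by (intro CollectI exI[of _ ?e]) simp
qed

lemma dual_eval_mpow:
  assumes "g \<in> mpow q N" "2 \<le> N" "\<And>i. dual_re (x i) = q i"
  shows "dual_eval x g = 0"
proof -
  obtain e where e: "g = (\<Prod>i\<in>UNIV. (mvar i - mconst (q i)) ^ e i)" "sum e UNIV = N"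
    using assms(1) unfolding mpow_def by blast
  have "dual_eval x g = (\<Prod>i\<in>UNIV. (x i - dual_of (q i)) ^ e i)"
    using e by (simp add: dual_eval_prod dual_eval_power dual_eval_diff)
  also have "\<dots> = 0"
    by (rule dual_prod_power_eq_0) (use assms(2,3) e(2) in auto)
  finally show ?thesis .
qed

section \<open>Quotients of dimension one and two\<close>

lemma ideal_gen_reduce_to_const:
  assumes vars: "\<And>i. mvar i - mconst (q i) \<in> ideal_gen G"
  shows "\<exists>c. p - mconst c \<in> ideal_gen G"
proof (induct p rule: mpoly_ring_induct)
  case (mconst c)
  then show ?case by (intro exI[of _ c]) (simp add: ideal_gen_0)
next
  case (mvar i)
  then show ?case using vars by blast
next
  case (add p1 p2)
  then obtain c1 c2 where "p1 - mconst c1 \<in> ideal_gen G" "p2 - mconst c2 \<in> ideal_gen G" by blast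
  then have "(p1 - mconst c1) + (p2 - mconst c2) \<in> ideal_gen G" by (rule ideal_gen_add)
  then show ?case by (intro exI[of _ "c1 + c2"]) (simp add: mconst_add algebra_simps)
next
  case (mult p1 p2)
  then obtain c1 c2 where "p1 - mconst c1 \<in> ideal_gen G" "p2 - mconst c2 \<in> ideal_gen G" by blast
  then have "(p1 - mconst c1) * p2 + mconst c1 * (p2 - mconst c2) \<in> ideal_gen G"
    by (intro ideal_gen_add ideal_gen_mult_left ideal_gen_mult_right)
  then show ?case by (intro exI[of _ "c1 * c2"]) (simp add: mconst_mult algebra_simps)
qed

lemma ideal_gen_reduce_to_linear:
  fixes k :: 4 and q :: "4 \<Rightarrow> complex"
  defines "t \<equiv> mvar k - mconst (q k)"
  assumes vars: "\<And>i. i \<noteq> k \<Longrightarrow> mvar i - mconst (q i) \<in> ideal_gen G"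
    and square: "t ^ 2 \<in> ideal_gen G"
  shows "\<exists>c d. p - (mconst c + mconst d * t) \<in> ideal_gen G"
proof (induct p rule: mpoly_ring_induct)
  case (mconst c)
  then show ?case by (intro exI[of _ c] exI[of _ 0]) (simp add: ideal_gen_0)
next
  case (mvar i)
  show ?case
  proof (cases "i = k")
    case True
    then show ?thesis by (intro exI[of _ "q k"] exI[of _ 1]) (simp add: t_def ideal_gen_0)
  next
    case False
    then show ?thesis using vars[of i] by (intro exI[of _ "q i"] exI[of _ 0]) simp
  qed
next
  case (add p1 p2)
  then obtain c1 d1 c2 d2 where
    "p1 - (mconst c1 + mconst d1 * t) \<in> ideal_gen G" "p2 - (mconst c2 + mconst d2 * t) \<in> ideal_gen G"
    by blast
  then have "(p1 - (mconst c1 + mconst d1 * t)) + (p2 - (mconst c2 + mconst d2 * t)) \<in> ideal_gen G"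
    by (rule ideal_gen_add)
  then show ?case
    by (intro exI[of _ "c1 + c2"] exI[of _ "d1 + d2"]) (simp add: mconst_add algebra_simps)
next
  case (mult p1 p2)
  then obtain c1 d1 c2 d2 where r1: "p1 - (mconst c1 + mconst d1 * t) \<in> ideal_gen G"
    and r2: "p2 - (mconst c2 + mconst d2 * t) \<in> ideal_gen G"
    by blast
  have "p1 * p2 - (mconst (c1 * c2) + mconst (c1 * d2 + d1 * c2) * t)
      = (p1 - (mconst c1 + mconst d1 * t)) * p2
        + (mconst c1 + mconst d1 * t) * (p2 - (mconst c2 + mconst d2 * t))
        + mconst (d1 * d2) * t ^ 2"
    unfolding mconst_mult mconst_add power2_eq_square by algebra
  also have "\<dots> \<in> ideal_gen G"
    by (intro ideal_gen_add ideal_gen_mult_right[OF r1] ideal_gen_mult_left[OF r2]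
        ideal_gen_mult_left[OF square])
  finally show ?case by blast
qed

lemma quot_dim_eq_1:
  assumes vars: "\<And>i. mvar i - mconst (q i) \<in> ideal_gen G"
    and vanish: "\<And>g. g \<in> G \<Longrightarrow> dual_eval (\<lambda>i. dual_of (q i)) g = 0"
  shows "quot_dim (ideal_gen G) 1"
  unfolding quot_dim_def
proof (intro exI[of _ "{1}"] conjI allI impI)
  fix p
  show "\<exists>c. p - (\<Sum>b\<in>{1}. mconst (c b) * b) \<in> ideal_gen G"
    using ideal_gen_reduce_to_const[OF vars, of p] by auto
next
  fix c :: "mpoly \<Rightarrow> complex"
  assume "(\<Sum>b\<in>{1}. mconst (c b) * b) \<in> ideal_gen G"
  then have "dual_eval (\<lambda>i. dual_of (q i)) (\<Sum>b\<in>{1}. mconst (c b) * b) = 0"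
    using vanish by (rule dual_eval_ideal_gen)
  then show "\<forall>b\<in>{1}. c b = 0" by (simp add: dual_eq_iff)
qed simp_all

lemma quot_dim_eq_2:
  assumes vars: "\<And>i. i \<noteq> k \<Longrightarrow> mvar i - mconst (q i) \<in> ideal_gen G"
    and square: "(mvar k - mconst (q k)) ^ 2 \<in> ideal_gen G"
    and vanish: "\<And>g. g \<in> G \<Longrightarrow> dual_eval (\<lambda>i. if i = k then Dual (q k) 1 else dual_of (q i)) g = 0"
  shows "quot_dim (ideal_gen G) 2"
  unfolding quot_dim_def
proof (intro exI[of _ "{1, mvar k}"] conjI allI impI)
  fix p
  obtain c d where cd: "p - (mconst c + mconst d * (mvar k - mconst (q k))) \<in> ideal_gen G"
    using ideal_gen_reduce_to_linear[OF vars square] by blast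
  let ?c = "\<lambda>b. if b = 1 then c - d * q k else d"
  have "(\<Sum>b\<in>{1, mvar k}. mconst (?c b) * b) = mconst c + mconst d * (mvar k - mconst (q k))"
    using one_neq_mvar[of k] by (simp add: mconst_diff mconst_mult algebra_simps)
  then show "\<exists>c. p - (\<Sum>b\<in>{1, mvar k}. mconst (c b) * b) \<in> ideal_gen G"
    using cd by (intro exI[of _ ?c]) simp
next
  fix c :: "mpoly \<Rightarrow> complex"
  let ?x = "\<lambda>i. if i = k then Dual (q k) 1 else dual_of (q i)"
  assume "(\<Sum>b\<in>{1, mvar k}. mconst (c b) * b) \<in> ideal_gen G"
  then have "dual_eval ?x (\<Sum>b\<in>{1, mvar k}. mconst (c b) * b) = 0"
    using vanish by (rule dual_eval_ideal_gen)
  then have "dual_of (c 1) + dual_of (c (mvar k)) * Dual (q k) 1 = 0"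
    using one_neq_mvar[of k] by (simp add: dual_eval_add dual_eval_mult)
  then show "\<forall>b\<in>{1, mvar k}. c b = 0" by (auto simp: dual_eq_iff)
next
  show "card {1, mvar k} = 2" using one_neq_mvar[of k] by simp
qed simp

lemma mpderiv_add: "mpderiv k (p + q) = mpderiv k p + mpderiv k q"
proof -
  let ?S = "Poly_Mapping.keys p \<union> Poly_Mapping.keys q"
  have extend: "mpderiv k r = (\<Sum>m\<in>?S. Poly_Mapping.single (m - Poly_Mapping.single k 1)
      (of_nat (Poly_Mapping.lookup m k) * Poly_Mapping.lookup r m))"
    if "Poly_Mapping.keys r \<subseteq> ?S" for r
    unfolding mpderiv_def
    by (rule sum.mono_neutral_left) (use that in \<open>auto simp: in_keys_iff\<close>)
  show ?thesis
    by (simp add: extend keys_add lookup_add distrib_left single_add sum.distrib)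
qed

lemma mpderiv_0 [simp]: "mpderiv k 0 = 0"
  by (simp add: mpderiv_def)

lemma mpderiv_single: "mpderiv k (Poly_Mapping.single m c) =
    Poly_Mapping.single (m - Poly_Mapping.single k 1) (of_nat (Poly_Mapping.lookup m k) * c)"
  by (simp add: mpderiv_def)

lemma mpderiv_uminus: "mpderiv k (- p) = - mpderiv k p"
  using mpderiv_add[of k p "- p"] by (simp add: eq_neg_iff_add_eq_0 add.commute)

lemma mpderiv_diff: "mpderiv k (p - q) = mpderiv k p - mpderiv k q"
  using mpderiv_add[of k p "- q"] mpderiv_uminus[of k q] by simp

lemma diff_single_add:
  "Poly_Mapping.lookup m k \<noteq> 0 \<Longrightarrow>
    m + n - Poly_Mapping.single k 1 = (m - Poly_Mapping.single k 1) + (n :: 4 \<Rightarrow>\<^sub>0 nat)"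
  by (intro poly_mapping_eqI) (auto simp: lookup_add lookup_minus lookup_single when_def)

lemma mpderiv_single_mult_single:
  "mpderiv k (Poly_Mapping.single m c * Poly_Mapping.single n d) =
    mpderiv k (Poly_Mapping.single m c) * Poly_Mapping.single n d
    + Poly_Mapping.single m c * mpderiv k (Poly_Mapping.single n d)"
proof -
  have "Poly_Mapping.single (m + n - Poly_Mapping.single k 1) (of_nat (Poly_Mapping.lookup m k) * (c * d))
      = Poly_Mapping.single (m - Poly_Mapping.single k 1 + n) (of_nat (Poly_Mapping.lookup m k) * c * d)"
    using diff_single_add[of m k n] by (cases "Poly_Mapping.lookup m k = 0") (simp_all add: mult.assoc)
  moreover have "Poly_Mapping.single (m + n - Poly_Mapping.single k 1) (of_nat (Poly_Mapping.lookup n k) * (c * d))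
      = Poly_Mapping.single (m + (n - Poly_Mapping.single k 1)) (c * (of_nat (Poly_Mapping.lookup n k) * d))"
    using diff_single_add[of n k m] by (cases "Poly_Mapping.lookup n k = 0")
      (simp_all add: add.commute mult.left_commute)
  ultimately show ?thesis
    by (simp only: mult_single mpderiv_single lookup_add of_nat_add distrib_right single_add)
qed

lemma mpderiv_mult: "mpderiv k (p * q) = mpderiv k p * q + p * mpderiv k q"
proof -
  have single_mult: "mpderiv k (Poly_Mapping.single m c * r) =
      mpderiv k (Poly_Mapping.single m c) * r + Poly_Mapping.single m c * mpderiv k r" for m c r
    by (induct r rule: mpoly_single_induct)
      (simp_all add: distrib_left distrib_right mpderiv_add mpderiv_single_mult_single)
  show ?thesis
    by (induct p rule: mpoly_single_induct)
      (simp_all add: distrib_left distrib_right mpderiv_add single_mult)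
qed

lemma mpderiv_mconst [simp]: "mpderiv k (mconst c) = 0"
  by (simp add: mconst_def mpderiv_single)

lemma mpderiv_numeral [simp]: "mpderiv k (numeral n) = 0"
  using mpderiv_mconst[of k "numeral n"] by simp

lemma mpderiv_mvar: "mpderiv k (mvar i) = (if i = k then 1 else 0)"
  by (simp add: mvar_def mpderiv_single lookup_single when_def)

lemma mpderiv_power: "mpderiv k (p ^ Suc n) = of_nat (Suc n) * p ^ n * mpderiv k p"
  by (induct n) (simp_all add: mpderiv_mult algebra_simps)

lemma mpderiv_power2: "mpderiv k (p ^ 2) = 2 * p * mpderiv k p"
  using mpderiv_power[of k p 1] by (simp add: numeral_2_eq_2)

lemma mpderiv_power3: "mpderiv k (p ^ 3) = 3 * p ^ 2 * mpderiv k p"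
  using mpderiv_power[of k p 2] by (simp add: numeral_3_eq_3)

lemma qmat_add: "qmat (p + q) i j = qmat p i j + qmat q i j"
  by (simp add: qmat_def lookup_add add_divide_distrib)

lemma qmat_diff: "qmat (p - q) i j = qmat p i j - qmat q i j"
  by (simp add: qmat_def lookup_minus diff_divide_distrib)

lemma qmat_mconst_mult: "qmat (mconst c * p) i j = c * qmat p i j"
  by (simp add: qmat_def)

lemma qmat_numeral_mult: "qmat (numeral n * p) i j = numeral n * qmat p i j"
  using qmat_mconst_mult[of "numeral n" p] by simp

lemma qmat_Qpoly: "qmat (Qpoly f a) i j = (\<Sum>k\<in>UNIV. a k * qmat (mpderiv k f) i j)"
  unfolding Qpoly_def sum_UNIV_4 by (simp add: qmat_add qmat_mconst_mult)

lemma single_add_single_eq_iff: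
  "Poly_Mapping.single i (1::nat) + Poly_Mapping.single j 1 = Poly_Mapping.single r 1 + Poly_Mapping.single c 1
    \<longleftrightarrow> (i = r \<and> j = c) \<or> (i = c \<and> j = r)"
proof
  assume eq: "Poly_Mapping.single i (1::nat) + Poly_Mapping.single j 1 = Poly_Mapping.single r 1 + Poly_Mapping.single c 1"
  have "((1::nat) when i = x) + (1 when j = x) = (1 when r = x) + (1 when c = x)" for x
    using arg_cong[OF eq, of "\<lambda>m. Poly_Mapping.lookup m x"] by (simp add: lookup_add lookup_single)
  from this[of i] this[of j] this[of r] show "(i = r \<and> j = c) \<or> (i = c \<and> j = r)"
    by (auto simp: when_def split: if_splits)
qed (auto simp: add.commute)

lemma single_add_single_eq_single_2_iff:
  "Poly_Mapping.single i (1::nat) + Poly_Mapping.single j 1 = Poly_Mapping.single r 2 \<longleftrightarrow> i = r \<and> j = r"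
proof
  assume eq: "Poly_Mapping.single i (1::nat) + Poly_Mapping.single j 1 = Poly_Mapping.single r 2"
  have "((1::nat) when i = x) + (1 when j = x) = (2 when r = x)" for x
    using arg_cong[OF eq, of "\<lambda>m. Poly_Mapping.lookup m x"] by (simp add: lookup_add lookup_single)
  from this[of i] this[of j] show "i = r \<and> j = r"
    by (auto simp: when_def split: if_splits)
qed (simp only: single_add[symmetric] one_add_one)

lemma qmat_mvar_mult:
  "qmat (mvar i * mvar j) r c =
     (if (r = i \<and> c = j) \<or> (r = j \<and> c = i) then if i = j then 1 else 1 / 2 else 0)"
  unfolding qmat_def mvar_mult_mvar lookup_single single_add_single_eq_iff
    single_add_single_eq_single_2_iff
  by (cases "r = c"; cases "i = j") (simp_all add: when_def, blast+)

lemma minor3_scale: "minor3 (\<lambda>i j. s * A i j) r c = s ^ 3 * minor3 A r c"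
  by (simp add: minor3_def det3_def Let_def algebra_simps power3_eq_cube)

lemma dual_eval_minor3: "dual_eval x (minor3 A r c) = minor3 (\<lambda>i j. dual_eval x (A i j)) r c"
  by (simp add: minor3_def det3_def Let_def dual_eval_add dual_eval_diff dual_eval_mult)

section \<open>The polar matrix\<close>

text \<open>For the cubic of the theorem, the polar quadric of a point a, i.e. the element
  a0 df/dx0 + ... + a3 df/dx3 of H(f), has coefficient matrix 3 * polar_matrix a lam.\<close>

definition polar_matrix :: "(4 \<Rightarrow> 'a::comm_ring_1) \<Rightarrow> (4 \<Rightarrow> 'a) \<Rightarrow> 4 \<Rightarrow> 4 \<Rightarrow> 'a" where
  "polar_matrix a k i j =
    (if i = 3 \<and> j = 3 then a 3 - (k 0 * a 0 + k 1 * a 1 + k 2 * a 2)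
     else if i = 3 then - (k j * a 3) else if j = 3 then - (k i * a 3)
     else if i = j then a i else 0)"

lemma minor3_polar_matrix:
  fixes a k :: "4 \<Rightarrow> 'a::comm_ring_1"
  defines "M \<equiv> polar_matrix a k" and "L \<equiv> k 0 * a 0 + k 1 * a 1 + k 2 * a 2"
  shows "minor3 M 0 0 = a 1 * a 2 * a 3 - k 1 ^ 2 * (a 2 * a 3 ^ 2) - k 2 ^ 2 * (a 1 * a 3 ^ 2) - a 1 * a 2 * L"
    and "minor3 M 1 1 = a 0 * a 2 * a 3 - k 0 ^ 2 * (a 2 * a 3 ^ 2) - k 2 ^ 2 * (a 0 * a 3 ^ 2) - a 0 * a 2 * L"
    and "minor3 M 2 2 = a 0 * a 1 * a 3 - k 0 ^ 2 * (a 1 * a 3 ^ 2) - k 1 ^ 2 * (a 0 * a 3 ^ 2) - a 0 * a 1 * L"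
    and "minor3 M 3 3 = a 0 * a 1 * a 2"
    and "minor3 M 0 1 = - (k 0 * k 1) * (a 2 * a 3 ^ 2)" "minor3 M 1 0 = - (k 0 * k 1) * (a 2 * a 3 ^ 2)"
    and "minor3 M 0 2 = (k 0 * k 2) * (a 1 * a 3 ^ 2)" "minor3 M 2 0 = (k 0 * k 2) * (a 1 * a 3 ^ 2)"
    and "minor3 M 1 2 = - (k 1 * k 2) * (a 0 * a 3 ^ 2)" "minor3 M 2 1 = - (k 1 * k 2) * (a 0 * a 3 ^ 2)"
    and "minor3 M 0 3 = - k 0 * (a 1 * a 2 * a 3)" "minor3 M 3 0 = - k 0 * (a 1 * a 2 * a 3)"
    and "minor3 M 1 3 = k 1 * (a 0 * a 2 * a 3)" "minor3 M 3 1 = k 1 * (a 0 * a 2 * a 3)"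
    and "minor3 M 2 3 = - k 2 * (a 0 * a 1 * a 3)" "minor3 M 3 2 = - k 2 * (a 0 * a 1 * a 3)"
  unfolding M_def L_def
  by (simp_all add: minor3_def det3_def others_def polar_matrix_def Let_def algebra_simps
      power2_eq_square)

lemma minor3_polar_matrix_eq_0:
  fixes a k :: "4 \<Rightarrow> 'a::comm_ring_1"
  defines "L \<equiv> k 0 * a 0 + k 1 * a 1 + k 2 * a 2"
  assumes "a 0 * a 1 * a 2 = 0"
    and "a 1 * a 2 * a 3 = 0" "a 0 * a 2 * a 3 = 0" "a 0 * a 1 * a 3 = 0"
    and "a 0 * a 3 ^ 2 = 0" "a 1 * a 3 ^ 2 = 0" "a 2 * a 3 ^ 2 = 0"
    and "a 1 * a 2 * L = 0" "a 0 * a 2 * L = 0" "a 0 * a 1 * L = 0"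
  shows "minor3 (polar_matrix a k) r c = 0"
  using cases_4[of r] cases_4[of c] assms(2-)
  by (elim disjE) (simp_all only: minor3_polar_matrix L_def[symmetric] mult_zero_right
      mult_zero_left diff_zero diff_self minus_zero)

lemma polar_matrix_scale: "polar_matrix (\<lambda>m. s * a m) k i j = s * polar_matrix a k i j"
  by (simp add: polar_matrix_def algebra_simps)

lemma minor3_polar_matrix_scale:
  "minor3 (polar_matrix (\<lambda>m. s * a m) k) r c = s ^ 3 * minor3 (polar_matrix a k) r c"
  unfolding polar_matrix_scale[abs_def] by (rule minor3_scale)

lemma minor3_polar_matrix_dual_of:
  "minor3 (polar_matrix (\<lambda>m. dual_of (a m)) (\<lambda>m. dual_of (k m))) r c = dual_of (minor3 (polar_matrix a k) r c)"
  by (simp add: minor3_def det3_def Let_def polar_matrix_def dual_eq_iff)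

lemma dual_eval_polar_matrix:
  "dual_eval x (polar_matrix mvar (\<lambda>i. mconst (k i)) i j) = polar_matrix x (\<lambda>i. dual_of (k i)) i j"
  by (simp add: polar_matrix_def dual_eval_add dual_eval_diff dual_eval_mult dual_eval_uminus)

lemma Qpoly_scale: "Qpoly f (\<lambda>k. c * b k) = mconst c * Qpoly f b"
  unfolding Qpoly_def sum_distrib_left by (simp add: mconst_mult mult.assoc)

lemma proj_eq_Qpoly_scale: "c \<noteq> 0 \<Longrightarrow> a = (\<lambda>k. c * b k) \<Longrightarrow> proj_eq (Qpoly f b) (Qpoly f a)"
  unfolding proj_eq_def by (auto simp: Qpoly_scale)

lemma proj_eq_common_left:
  assumes "proj_eq T P" "proj_eq T P'"
  shows "proj_eq P P'"
proof -
  obtain c d where "c \<noteq> 0" "P = mconst c * T" "d \<noteq> 0" "P' = mconst d * T"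
    using assms unfolding proj_eq_def by blast
  then have "d / c \<noteq> 0" "P' = mconst (d / c) * P"
    by (simp_all add: mult.assoc[symmetric] mconst_mult[symmetric])
  then show ?thesis unfolding proj_eq_def by blast
qed

lemma hessian_discriminant_if_few_points:
  assumes cover: "\<forall>Q\<in>hess_points f. \<exists>P\<in>set L. proj_eq P Q" and "length L < 10"
  shows "hessian_discriminant f"
  unfolding hessian_discriminant_def
proof
  assume "\<exists>S. finite S \<and> card S = 10 \<and> S \<subseteq> hess_points f \<and> (\<forall>P\<in>S. \<forall>Q\<in>S. proj_eq P Q \<longrightarrow> P = Q)
      \<and> (\<forall>Q\<in>hess_points f. \<exists>P\<in>S. proj_eq P Q) \<and> (\<forall>P\<in>S. hess_mult f P 1)"
  then obtain S where S: "card S = 10" "S \<subseteq> hess_points f" "\<forall>P\<in>S. \<forall>Q\<in>S. proj_eq P Q \<longrightarrow> P = Q"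
    by blast
  define g where "g Q = (SOME P. P \<in> set L \<and> proj_eq P Q)" for Q
  have g: "g Q \<in> set L \<and> proj_eq (g Q) Q" if "Q \<in> S" for Q
    unfolding g_def by (rule someI_ex) (use cover S(2) that in blast)
  have "inj_on g S"
  proof (rule inj_onI)
    fix P Q assume "P \<in> S" "Q \<in> S" "g P = g Q"
    then show "P = Q" using g[of P] g[of Q] proj_eq_common_left S(3) by metis
  qed
  then have "card S \<le> card (set L)"
    using g by (intro card_inj_on_le) auto
  also have "\<dots> < 10" using card_length[of L] assms(2) by linarith
  finally show False using S(1) by simp
qed

section \<open>The cubic of the theorem\<close>

locale lambda_cubic =
  fixes lam :: "4 \<Rightarrow> complex"
  assumes lam_nonzero: "i \<noteq> 3 \<Longrightarrow> lam i \<noteq> 0"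
begin

definition cubic :: mpoly where
  "cubic = mvar 0 ^ 3 + mvar 1 ^ 3 + mvar 2 ^ 3
      - mvar 3 ^ 2 * (mconst (3 * lam 0) * mvar 0 + mconst (3 * lam 1) * mvar 1
                      + mconst (3 * lam 2) * mvar 2 - mvar 3)"

definition lin :: mpoly where
  "lin = mconst (lam 0) * mvar 0 + mconst (lam 1) * mvar 1 + mconst (lam 2) * mvar 2"

lemma mpderiv_cubic: "i \<noteq> 3 \<Longrightarrow> mpderiv i cubic = 3 * (mvar i ^ 2 - mconst (lam i) * mvar 3 ^ 2)"
  using cases_4[of i]
  by (elim disjE) (simp_all add: cubic_def mconst_mult mpderiv_add mpderiv_diff mpderiv_mult
      mpderiv_mvar mpderiv_power2 mpderiv_power3 algebra_simps)

lemma mpderiv_3_cubic: "mpderiv 3 cubic = - 3 * (mvar 3 * (2 * lin - mvar 3))"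
  by (simp add: cubic_def lin_def mconst_mult mpderiv_add mpderiv_diff mpderiv_mult mpderiv_mvar
      mpderiv_power2 mpderiv_power3 algebra_simps power2_eq_square)

lemma Qpoly_cubic:
  "Qpoly cubic a =
      mconst (3 * a 0) * (mvar 0 ^ 2 - mconst (lam 0) * mvar 3 ^ 2)
    + mconst (3 * a 1) * (mvar 1 ^ 2 - mconst (lam 1) * mvar 3 ^ 2)
    + mconst (3 * a 2) * (mvar 2 ^ 2 - mconst (lam 2) * mvar 3 ^ 2)
    - mconst (3 * a 3) * (mvar 3 * (2 * lin - mvar 3))"
  unfolding Qpoly_def sum_UNIV_4 mpderiv_3_cubic
  by (simp add: mpderiv_cubic mconst_mult algebra_simps)

lemma qmat_mpderiv_cubic:
  "qmat (mpderiv k cubic) r c = 3 * polar_matrix (\<lambda>m. if m = k then 1 else 0) lam r c"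
proof (cases "k = 3")
  case True
  have "mpderiv 3 cubic = mconst (- 6 * lam 0) * (mvar 0 * mvar 3) + mconst (- 6 * lam 1) * (mvar 1 * mvar 3)
      + mconst (- 6 * lam 2) * (mvar 2 * mvar 3) + mconst 3 * (mvar 3 * mvar 3)"
    by (simp add: mpderiv_3_cubic lin_def mconst_mult mconst_uminus algebra_simps)
  then show ?thesis
    using True cases_4[of r] cases_4[of c]
    by (elim disjE) (simp_all add: qmat_add qmat_mconst_mult qmat_numeral_mult qmat_mvar_mult polar_matrix_def)
next
  case False
  then have "mpderiv k cubic = mconst 3 * (mvar k * mvar k) - mconst (3 * lam k) * (mvar 3 * mvar 3)"
    by (simp add: mpderiv_cubic mconst_mult algebra_simps power2_eq_square)
  then show ?thesis
    using False cases_4[of k] cases_4[of r] cases_4[of c]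
    by (elim disjE) (simp_all add: qmat_diff qmat_mconst_mult qmat_numeral_mult qmat_mvar_mult polar_matrix_def)
qed

lemma qmat_Qpoly_cubic: "qmat (Qpoly cubic a) r c = 3 * polar_matrix a lam r c"
  using cases_4[of r] cases_4[of c]
  by (elim disjE) (simp_all add: qmat_Qpoly sum_UNIV_4 qmat_mpderiv_cubic polar_matrix_def algebra_simps)

lemma hmat_cubic: "hmat cubic r c = mconst 3 * polar_matrix mvar (\<lambda>i. mconst (lam i)) r c"
  using cases_4[of r] cases_4[of c]
  by (elim disjE) (simp_all add: hmat_def sum_UNIV_4 qmat_mpderiv_cubic polar_matrix_def
      mconst_mult mconst_uminus mconst_diff algebra_simps)

lemma lin_perm:
  "distinct [i, j, k, 3] \<Longrightarrow> lin = mconst (lam i) * mvar i + mconst (lam j) * mvar j + mconst (lam k) * mvar k"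
  using distinct_4_cases[of i j k] by (auto simp: lin_def ac_simps)

abbreviation generic_polar_matrix :: "4 \<Rightarrow> 4 \<Rightarrow> mpoly" where
  "generic_polar_matrix \<equiv> polar_matrix mvar (\<lambda>i. mconst (lam i))"

lemma minor3_hmat_cubic: "minor3 (hmat cubic) r c = 27 * minor3 generic_polar_matrix r c"
proof -
  have "hmat cubic = (\<lambda>i j. mconst 3 * generic_polar_matrix i j)"
    by (intro ext) (rule hmat_cubic)
  then show ?thesis by (simp add: minor3_scale mconst_power[symmetric])
qed

lemma generic_minor_in_ideal:
  assumes "hess_minors cubic \<subseteq> G"
  shows "minor3 generic_polar_matrix r c \<in> ideal_gen G"
proof (rule ideal_gen_mconst_cancel)
  show "mconst 27 * minor3 generic_polar_matrix r c \<in> ideal_gen G"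
    using assms unfolding hess_minors_def by (auto simp: minor3_hmat_cubic intro: ideal_gen_base)
qed simp

lemma hess_minor_monomials:
  assumes "hess_minors cubic \<subseteq> G"
  shows "mvar 0 * mvar 1 * mvar 2 \<in> ideal_gen G"
    and "mvar 1 * mvar 2 * mvar 3 \<in> ideal_gen G" "mvar 0 * mvar 2 * mvar 3 \<in> ideal_gen G"
      "mvar 0 * mvar 1 * mvar 3 \<in> ideal_gen G"
    and "mvar 0 * mvar 3 ^ 2 \<in> ideal_gen G" "mvar 1 * mvar 3 ^ 2 \<in> ideal_gen G"
      "mvar 2 * mvar 3 ^ 2 \<in> ideal_gen G"
proof -
  note minor = generic_minor_in_ideal[OF assms]
  note M = minor3_polar_matrix[of mvar "\<lambda>i. mconst (lam i)"]
  have cancel: "p \<in> ideal_gen G" if "minor3 generic_polar_matrix r c = mconst e * p" "e \<noteq> 0" for p r c e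
    using ideal_gen_mconst_cancel minor[of r c] that by metis
  have nz: "lam 0 \<noteq> 0" "lam 1 \<noteq> 0" "lam 2 \<noteq> 0"
    by (simp_all add: lam_nonzero)
  show "mvar 0 * mvar 1 * mvar 2 \<in> ideal_gen G"
    using minor[of 3 3] by (simp add: M)
  show "mvar 1 * mvar 2 * mvar 3 \<in> ideal_gen G"
    by (rule cancel[of 0 3 "- lam 0"]) (simp_all add: M mconst_uminus nz algebra_simps)
  show "mvar 0 * mvar 2 * mvar 3 \<in> ideal_gen G"
    by (rule cancel[of 1 3 "lam 1"]) (simp_all add: M nz algebra_simps)
  show "mvar 0 * mvar 1 * mvar 3 \<in> ideal_gen G"
    by (rule cancel[of 2 3 "- lam 2"]) (simp_all add: M mconst_uminus nz algebra_simps)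
  show "mvar 0 * mvar 3 ^ 2 \<in> ideal_gen G"
    by (rule cancel[of 1 2 "- lam 1 * lam 2"]) (simp_all add: M mconst_uminus mconst_mult nz algebra_simps)
  show "mvar 1 * mvar 3 ^ 2 \<in> ideal_gen G"
    by (rule cancel[of 0 2 "lam 0 * lam 2"]) (simp_all add: M mconst_mult nz algebra_simps)
  show "mvar 2 * mvar 3 ^ 2 \<in> ideal_gen G"
    by (rule cancel[of 0 1 "- lam 0 * lam 1"]) (simp_all add: M mconst_uminus mconst_mult nz algebra_simps)
qed

lemma hess_minor_lin_relations:
  assumes "hess_minors cubic \<subseteq> G"
  shows "mvar 1 * mvar 2 * lin \<in> ideal_gen G" "mvar 0 * mvar 2 * lin \<in> ideal_gen G"
    "mvar 0 * mvar 1 * lin \<in> ideal_gen G"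
proof -
  note minor = generic_minor_in_ideal[OF assms] and mono = hess_minor_monomials[OF assms]
  note M = minor3_polar_matrix[of mvar "\<lambda>i. mconst (lam i)"]
  have "mvar 1 * mvar 2 * lin = mvar 1 * mvar 2 * mvar 3 - mconst (lam 1) ^ 2 * (mvar 2 * mvar 3 ^ 2)
      - mconst (lam 2) ^ 2 * (mvar 1 * mvar 3 ^ 2) - minor3 generic_polar_matrix 0 0"
    unfolding M lin_def by algebra
  also have "\<dots> \<in> ideal_gen G"
    by (intro ideal_gen_diff mono(2) ideal_gen_mult_left[OF mono(6)] ideal_gen_mult_left[OF mono(7)] minor)
  finally show "mvar 1 * mvar 2 * lin \<in> ideal_gen G" .
  have "mvar 0 * mvar 2 * lin = mvar 0 * mvar 2 * mvar 3 - mconst (lam 0) ^ 2 * (mvar 2 * mvar 3 ^ 2)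
      - mconst (lam 2) ^ 2 * (mvar 0 * mvar 3 ^ 2) - minor3 generic_polar_matrix 1 1"
    unfolding M lin_def by algebra
  also have "\<dots> \<in> ideal_gen G"
    by (intro ideal_gen_diff mono(3) ideal_gen_mult_left[OF mono(5)] ideal_gen_mult_left[OF mono(7)] minor)
  finally show "mvar 0 * mvar 2 * lin \<in> ideal_gen G" .
  have "mvar 0 * mvar 1 * lin = mvar 0 * mvar 1 * mvar 3 - mconst (lam 0) ^ 2 * (mvar 1 * mvar 3 ^ 2)
      - mconst (lam 1) ^ 2 * (mvar 0 * mvar 3 ^ 2) - minor3 generic_polar_matrix 2 2"
    unfolding M lin_def by algebra
  also have "\<dots> \<in> ideal_gen G"
    by (intro ideal_gen_diff mono(4) ideal_gen_mult_left[OF mono(5)] ideal_gen_mult_left[OF mono(6)] minor)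
  finally show "mvar 0 * mvar 1 * lin \<in> ideal_gen G" .
qed

lemma hess_minor_consequences_perm:
  assumes "hess_minors cubic \<subseteq> G" "distinct [i, j, k, 3]"
  shows "mvar i * mvar j * mvar k \<in> ideal_gen G"
    and "mvar i * mvar j * mvar 3 \<in> ideal_gen G"
    and "mvar i * mvar 3 ^ 2 \<in> ideal_gen G"
    and "mvar i * mvar j * lin \<in> ideal_gen G"
  using distinct_4_cases[OF assms(2)] hess_minor_monomials[OF assms(1)] hess_minor_lin_relations[OF assms(1)]
  by (auto simp: ac_simps)

lemma chart_relations:
  assumes "hess_minors cubic \<subseteq> G" "mvar i - 1 \<in> ideal_gen G" "distinct [i, j, k, 3]"
  shows "mvar j * mvar k \<in> ideal_gen G"
    and "mvar j * mvar 3 \<in> ideal_gen G"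
    and "mvar 3 ^ 2 \<in> ideal_gen G"
    and "mvar j * (mconst (lam i) + mconst (lam j) * mvar j) \<in> ideal_gen G"
proof -
  let ?I = "ideal_gen G"
  have reduce: "p \<in> ?I" if "mvar i * p \<in> ?I" for p
  proof -
    have "mvar i * p - (mvar i - 1) * p \<in> ?I"
      by (intro ideal_gen_diff that ideal_gen_mult_right[OF assms(2)])
    then show ?thesis by (simp add: algebra_simps)
  qed
  note gens = hess_minor_consequences_perm[OF assms(1,3)]
  show "mvar j * mvar k \<in> ?I" "mvar j * mvar 3 \<in> ?I" "mvar 3 ^ 2 \<in> ?I"
    using gens(1-3) by (auto intro: reduce simp: mult.assoc)
  have jk: "mvar j * mvar k \<in> ?I" and jlin: "mvar j * lin \<in> ?I"
    using gens(1,4) by (auto intro: reduce simp: mult.assoc)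
  have "mvar j * (mconst (lam i) + mconst (lam j) * mvar j)
      = mvar j * lin - mconst (lam i) * mvar j * (mvar i - 1) - mconst (lam k) * (mvar j * mvar k)"
    using lin_perm[OF assms(3)] by (simp add: algebra_simps)
  also have "\<dots> \<in> ?I"
    by (intro ideal_gen_diff jlin ideal_gen_mult_left[OF assms(2)] ideal_gen_mult_left[OF jk])
  finally show "mvar j * (mconst (lam i) + mconst (lam j) * mvar j) \<in> ?I" .
qed

text \<open>Coordinates a of the seven points, scaled so that Qpoly cubic a is exactly the quadric
  listed in the theorem.\<close>

definition double_point :: "4 \<Rightarrow> 4 \<Rightarrow> complex" where
  "double_point i m = (if m = i then 1 / 3 else 0)"

definition simple_point :: "4 \<Rightarrow> 4 \<Rightarrow> 4 \<Rightarrow> complex" where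
  "simple_point i j m = (if m = i then lam j / 3 else if m = j then - lam i / 3 else 0)"

definition apex_point :: "4 \<Rightarrow> complex" where
  "apex_point m = (if m = 3 then - 1 / 3 else 0)"

lemma minor3_double_point: "i \<noteq> 3 \<Longrightarrow> minor3 (polar_matrix (double_point i) lam) r c = 0"
  using cases_4[of i] by (intro minor3_polar_matrix_eq_0) (auto simp: double_point_def)

lemma minor3_simple_point:
  "distinct [i, j, k, 3] \<Longrightarrow> minor3 (polar_matrix (simple_point i j) lam) r c = 0"
  using distinct_4_cases[of i j k]
  by (intro minor3_polar_matrix_eq_0) (auto simp: simple_point_def algebra_simps)

lemma minor3_apex_point: "minor3 (polar_matrix apex_point lam) r c = 0"
  by (intro minor3_polar_matrix_eq_0) (simp_all add: apex_point_def)

lemma minor3_double_point_tangent: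
  "i \<noteq> 3 \<Longrightarrow>
    minor3 (polar_matrix (\<lambda>m. if m = i then 1 else if m = 3 then Dual 0 1 else 0) (\<lambda>m. dual_of (lam m))) r c = 0"
  using cases_4[of i] by (intro minor3_polar_matrix_eq_0) (auto simp: dual_eq_iff power2_eq_square)

lemma Qpoly_cubic_inj: "Qpoly cubic a = Qpoly cubic b \<Longrightarrow> a = b"
proof -
  assume "Qpoly cubic a = Qpoly cubic b"
  then have "polar_matrix a lam r c = polar_matrix b lam r c" for r c
    using qmat_Qpoly_cubic[of a r c] qmat_Qpoly_cubic[of b r c] by simp
  from this[of 0 0] this[of 1 1] this[of 2 2] this[of 0 3] show "a = b"
    using lam_nonzero[of 0] by (intro fun_eq_4I) (simp_all add: polar_matrix_def)
qed

lemma proj_eq_Qpoly_cubicD: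
  assumes "proj_eq (Qpoly cubic b) (Qpoly cubic a)"
  obtains c where "c \<noteq> 0" "a = (\<lambda>m. c * b m)"
proof -
  obtain c where "c \<noteq> 0" "Qpoly cubic a = mconst c * Qpoly cubic b"
    using assms unfolding proj_eq_def by blast
  then show ?thesis using that Qpoly_cubic_inj by (metis Qpoly_scale)
qed

lemma rank_le2_Qpoly_cubic: "rank_le2 (Qpoly cubic a) \<longleftrightarrow> (\<forall>r c. minor3 (polar_matrix a lam) r c = 0)"
proof -
  have "qmat (Qpoly cubic a) = (\<lambda>i j. 3 * polar_matrix a lam i j)"
    by (intro ext) (rule qmat_Qpoly_cubic)
  then show ?thesis unfolding rank_le2_def by (simp add: minor3_scale)
qed

lemma Qpoly_cubic_in_hess_points:
  assumes "a \<noteq> (\<lambda>_. 0)" "\<And>r c. minor3 (polar_matrix a lam) r c = 0"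
  shows "Qpoly cubic a \<in> hess_points cubic"
proof -
  have "Qpoly cubic (\<lambda>_. 0) = 0" by (simp add: Qpoly_def)
  then have "Qpoly cubic a \<noteq> 0" using assms(1) Qpoly_cubic_inj by metis
  then show ?thesis
    unfolding hess_points_def Hspace_def using assms(2) rank_le2_Qpoly_cubic by auto
qed

lemma dual_eval_hess_minors:
  assumes "\<And>r c. minor3 (polar_matrix x (\<lambda>m. dual_of (lam m))) r c = 0" "g \<in> hess_minors cubic"
  shows "dual_eval x g = 0"
proof -
  obtain r c where g: "g = minor3 (hmat cubic) r c"
    using assms(2) unfolding hess_minors_def by blast
  have "(\<lambda>i j. dual_eval x (generic_polar_matrix i j)) = polar_matrix x (\<lambda>m. dual_of (lam m))"
    by (intro ext) (rule dual_eval_polar_matrix)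
  then show ?thesis
    using assms(1) by (simp add: g minor3_hmat_cubic dual_eval_mult dual_eval_minor3)
qed

abbreviation chart_generators :: "4 \<Rightarrow> (4 \<Rightarrow> complex) \<Rightarrow> nat \<Rightarrow> mpoly set" where
  "chart_generators i q N \<equiv> insert (mvar i - 1) (hess_minors cubic) \<union> mpow q N"

lemma dual_eval_chart_generators:
  assumes "x i = 1" "\<And>m. dual_re (x m) = q m" "2 \<le> N"
    and "\<And>r c. minor3 (polar_matrix x (\<lambda>m. dual_of (lam m))) r c = 0"
    and "g \<in> chart_generators i q N"
  shows "dual_eval x g = 0"
  using assms(5) dual_eval_hess_minors[OF assms(4)] dual_eval_mpow[OF _ assms(3,2)] assms(1)
  by (auto simp: dual_eval_diff)

lemma quot_dim_double_chart:
  assumes ijk: "distinct [i, j, k, 3]" and N: "2 \<le> N"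
  shows "quot_dim (ideal_gen (chart_generators i (\<lambda>m. if m = i then 1 else 0) N)) 2"
proof -
  let ?q = "\<lambda>m. if m = i then 1 else 0 :: complex"
  let ?K = "ideal_gen (chart_generators i ?q N)"
  have sub: "hess_minors cubic \<subseteq> chart_generators i ?q N" by blast
  have e: "mvar i - 1 \<in> ?K" by (rule ideal_gen_base) blast
  have ikj: "distinct [i, k, j, 3]" using ijk by auto
  note rel_j = chart_relations[OF sub e ijk] and rel_k = chart_relations[OF sub e ikj]
  have var: "mvar m \<in> ?K"
    if m: "m \<noteq> i" "m \<noteq> 3" and rel: "mvar m * (mconst (lam i) + mconst (lam m) * mvar m) \<in> ?K" for m
  proof (rule ideal_gen_cancel_unit[OF rel])
    have "(mvar m - mconst (?q m)) ^ N \<in> ?K"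
      using mpow_var_power[of m ?q N] by (auto intro: ideal_gen_base)
    then have "mconst (lam m) ^ N * mvar m ^ N \<in> ?K"
      using m by (simp add: ideal_gen_mult_left)
    then show "(mconst (lam m) * mvar m) ^ N \<in> ?K" by (simp add: power_mult_distrib)
    show "lam i \<noteq> 0" using ijk by (simp add: lam_nonzero)
  qed
  have xj: "mvar j \<in> ?K" and xk: "mvar k \<in> ?K"
    using var[OF _ _ rel_j(4)] var[OF _ _ rel_k(4)] ijk by auto
  show ?thesis
  proof (rule quot_dim_eq_2[where k = 3])
    show "mvar m - mconst (?q m) \<in> ?K" if "m \<noteq> 3" for m
      using distinct_4_exhaust[OF ijk, of m] that e xj xk ijk by auto
    show "(mvar 3 - mconst (?q 3)) ^ 2 \<in> ?K"
      using rel_j(3) ijk by simp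
    have x: "(\<lambda>m. if m = 3 then Dual (?q 3) 1 else dual_of (?q m))
        = (\<lambda>m. if m = i then 1 else if m = 3 then Dual 0 1 else 0)"
      using ijk by (auto simp: fun_eq_iff)
    show "dual_eval (\<lambda>m. if m = 3 then Dual (?q 3) 1 else dual_of (?q m)) g = 0"
      if "g \<in> chart_generators i ?q N" for g
      unfolding x using ijk minor3_double_point_tangent[of i]
      by (intro dual_eval_chart_generators[OF _ _ N _ that]) auto
  qed
qed

lemma quot_dim_simple_chart:
  assumes ijk: "distinct [i, j, k, 3]" and N: "2 \<le> N"
  defines "q \<equiv> \<lambda>m. if m = i then 1 else if m = j then - lam i / lam j else 0"
  shows "quot_dim (ideal_gen (chart_generators i q N)) 1"
proof -
  let ?K = "ideal_gen (chart_generators i q N)"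
  let ?t = "mvar j - mconst (q j)"
  have sub: "hess_minors cubic \<subseteq> chart_generators i q N" by blast
  have e: "mvar i - 1 \<in> ?K" by (rule ideal_gen_base) blast
  note rel = chart_relations[OF sub e ijk]
  have lam: "lam i \<noteq> 0" "lam j \<noteq> 0" using ijk by (simp_all add: lam_nonzero)
  have qj: "q j = - lam i / lam j" using ijk by (auto simp: q_def)
  \<comment> \<open>mvar j is a unit modulo the chart ideal, being q j plus a nilpotent\<close>
  have unit: "p \<in> ?K" if "p * mvar j \<in> ?K" for p
  proof (rule ideal_gen_cancel_unit)
    show "p * (mconst (q j) + ?t) \<in> ?K" using that by simp
    show "?t ^ N \<in> ?K" using mpow_var_power[of j q N] by (auto intro: ideal_gen_base)
    show "q j \<noteq> 0" using lam by (simp add: qj)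
  qed
  have xk: "mvar k \<in> ?K" by (rule unit) (use rel(1) in \<open>simp add: mult.commute\<close>)
  have x3: "mvar 3 \<in> ?K" by (rule unit) (use rel(2) in \<open>simp add: mult.commute\<close>)
  have eq: "mvar j * (mconst (lam i) + mconst (lam j) * mvar j) = mconst (lam j) * (?t * mvar j)"
    using lam by (simp add: qj mconst_diff mconst_uminus mconst_mult[symmetric] algebra_simps)
  have "mconst (lam j) * (?t * mvar j) \<in> ?K" using rel(4) by (simp only: eq)
  then have "?t * mvar j \<in> ?K" using lam(2) by (rule ideal_gen_mconst_cancel)
  then have t: "?t \<in> ?K" by (rule unit)
  show ?thesis
  proof (rule quot_dim_eq_1)
    show "mvar m - mconst (q m) \<in> ?K" for m
      using distinct_4_exhaust[OF ijk, of m] e x3 xk t ijk by (auto simp: q_def)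
    have q: "q = (\<lambda>m. (3 / lam j) * simple_point i j m)"
      using ijk lam by (auto simp: q_def simple_point_def fun_eq_iff)
    have "minor3 (polar_matrix q lam) r c = 0" for r c
      unfolding q minor3_polar_matrix_scale minor3_simple_point[OF ijk] by simp
    then show "dual_eval (\<lambda>m. dual_of (q m)) g = 0" if "g \<in> chart_generators i q N" for g
      using ijk by (intro dual_eval_chart_generators[OF _ _ N _ that])
        (simp_all add: q_def minor3_polar_matrix_dual_of)
  qed
qed

lemma quot_dim_apex_chart:
  assumes N: "2 \<le> N"
  shows "quot_dim (ideal_gen (chart_generators 3 (\<lambda>m. if m = 3 then 1 else 0) N)) 1"
proof -
  let ?q = "\<lambda>m. if m = 3 then 1 else 0 :: complex"
  let ?K = "ideal_gen (chart_generators 3 ?q N)"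
  have sub: "hess_minors cubic \<subseteq> chart_generators 3 ?q N" by blast
  have unit: "p \<in> ?K" if "p * mvar 3 \<in> ?K" for p
  proof (rule ideal_gen_cancel_unit)
    show "p * (mconst 1 + (mvar 3 - 1)) \<in> ?K" using that by simp
    show "(mvar 3 - 1) ^ N \<in> ?K"
      using mpow_var_power[of 3 ?q N] by (auto intro: ideal_gen_base)
  qed simp
  have "mvar i \<in> ?K" if i3: "i \<noteq> 3" for i
  proof -
    obtain j k where ijk: "distinct [i, j, k, 3]"
      by (rule obtain_distinct_4[OF i3])
    have "mvar i * mvar 3 * mvar 3 \<in> ?K"
      using hess_minor_consequences_perm(3)[OF sub ijk] by (simp add: power2_eq_square mult.assoc)
    then have "mvar i * mvar 3 \<in> ?K" by (rule unit)
    then show ?thesis by (rule unit)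
  qed
  show ?thesis
  proof (rule quot_dim_eq_1)
    show "mvar m - mconst (?q m) \<in> ?K" for m
      using \<open>\<And>i. i \<noteq> 3 \<Longrightarrow> mvar i \<in> ?K\<close>[of m] by (cases "m = 3") (auto intro: ideal_gen_base)
    have q: "?q = (\<lambda>m. - 3 * apex_point m)" by (auto simp: apex_point_def fun_eq_iff)
    have "minor3 (polar_matrix ?q lam) r c = 0" for r c
      unfolding q minor3_polar_matrix_scale minor3_apex_point by simp
    then show "dual_eval (\<lambda>m. dual_of (?q m)) g = 0" if "g \<in> chart_generators 3 ?q N" for g
      by (intro dual_eval_chart_generators[OF _ _ N _ that]) (simp_all add: minor3_polar_matrix_dual_of)
  qed
qed

lemma hess_mult_cubic_if_charts:
  assumes "\<And>j N. b j \<noteq> 0 \<Longrightarrow> 2 \<le> N \<Longrightarrow> quot_dim (ideal_gen (chart_generators j (\<lambda>m. b m / b j) N)) k"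
  shows "hess_mult cubic (Qpoly cubic b) k"
  unfolding hess_mult_def proj_length_def local_length_def
  using assms Qpoly_cubic_inj by (metis Un_insert_left)

lemma hess_mult_double_point: "i \<noteq> 3 \<Longrightarrow> hess_mult cubic (Qpoly cubic (double_point i)) 2"
proof (rule hess_mult_cubic_if_charts)
  fix j :: 4 and N :: nat
  assume "i \<noteq> 3" "double_point i j \<noteq> 0" "2 \<le> N"
  moreover obtain j' k where "distinct [i, j', k, 3]"
    using obtain_distinct_4[OF \<open>i \<noteq> 3\<close>] .
  moreover have "(\<lambda>m. double_point i m / double_point i i) = (\<lambda>m. if m = i then 1 else 0)"
    by (auto simp: double_point_def)
  ultimately show "quot_dim (ideal_gen (chart_generators j (\<lambda>m. double_point i m / double_point i j) N)) 2"
    using quot_dim_double_chart by (auto simp: double_point_def split: if_splits)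
qed

lemma hess_mult_simple_point:
  assumes ijk: "distinct [i, j, k, 3]"
  shows "hess_mult cubic (Qpoly cubic (simple_point i j)) 1"
proof (rule hess_mult_cubic_if_charts)
  fix m :: 4 and N :: nat
  assume m: "simple_point i j m \<noteq> 0" and N: "2 \<le> N"
  have lam: "lam i \<noteq> 0" "lam j \<noteq> 0" using ijk by (simp_all add: lam_nonzero)
  have "(\<lambda>t. simple_point i j t / simple_point i j i)
      = (\<lambda>t. if t = i then 1 else if t = j then - lam i / lam j else 0)"
    "(\<lambda>t. simple_point i j t / simple_point i j j)
      = (\<lambda>t. if t = j then 1 else if t = i then - lam j / lam i else 0)"
    using ijk lam by (auto simp: simple_point_def fun_eq_iff)
  moreover have "m = i \<or> m = j" using m by (auto simp: simple_point_def split: if_splits)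
  moreover have "distinct [j, i, k, 3]" using ijk by auto
  ultimately show "quot_dim (ideal_gen (chart_generators m (\<lambda>t. simple_point i j t / simple_point i j m) N)) 1"
    using quot_dim_simple_chart[OF ijk N] quot_dim_simple_chart[of j i k, OF _ N] by auto
qed

lemma hess_mult_apex_point: "hess_mult cubic (Qpoly cubic apex_point) 1"
proof (rule hess_mult_cubic_if_charts)
  fix j :: 4 and N :: nat
  assume "apex_point j \<noteq> 0" "2 \<le> N"
  moreover have "(\<lambda>m. apex_point m / apex_point 3) = (\<lambda>m. if m = 3 then 1 else 0)"
    by (auto simp: apex_point_def)
  ultimately show "quot_dim (ideal_gen (chart_generators j (\<lambda>m. apex_point m / apex_point j) N)) 1"
    using quot_dim_apex_chart by (auto simp: apex_point_def split: if_splits)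
qed

lemma hess_point_cases:
  assumes nonzero: "a \<noteq> (\<lambda>_. 0)" and minors: "\<And>r c. minor3 (polar_matrix a lam) r c = 0"
  obtains (apex) "\<And>m. m \<noteq> 3 \<Longrightarrow> a m = 0"
    | (double) i where "i \<noteq> 3" "a i \<noteq> 0" "\<And>m. m \<noteq> i \<Longrightarrow> a m = 0"
    | (simple) i j k where "(i, j, k) \<in> {(0, 1, 2), (0, 2, 1), (1, 2, 0)}"
        "a i \<noteq> 0" "a k = 0" "a 3 = 0" "lam i * a i + lam j * a j = 0"
proof -
  note M = minor3_polar_matrix[of a lam]
  have lam: "lam 0 \<noteq> 0" "lam 1 \<noteq> 0" "lam 2 \<noteq> 0" by (simp_all add: lam_nonzero)
  have a012: "a 0 * a 1 * a 2 = 0" using minors[of 3 3] by (simp add: M)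
  have a3: "a 0 = 0 \<or> a 3 = 0" "a 1 = 0 \<or> a 3 = 0" "a 2 = 0 \<or> a 3 = 0"
    using minors[of 1 2] minors[of 0 2] minors[of 0 1] lam by (simp_all add: M)
  show thesis
  proof (cases "a 3 = 0")
    case False
    then show thesis using a3 cases_4 apex by metis
  next
    case True
    let ?L = "lam 0 * a 0 + lam 1 * a 1 + lam 2 * a 2"
    have L: "a 1 * a 2 * ?L = 0" "a 0 * a 2 * ?L = 0" "a 0 * a 1 * ?L = 0"
      using minors[of 0 0] minors[of 1 1] minors[of 2 2] True by (simp_all add: M)
    have "a 0 \<noteq> 0 \<or> a 1 \<noteq> 0 \<or> a 2 \<noteq> 0"
      using nonzero True fun_eq_4I[of a "\<lambda>_. 0"] by auto
    then consider "a 0 \<noteq> 0" "a 1 \<noteq> 0" | "a 0 \<noteq> 0" "a 2 \<noteq> 0" | "a 1 \<noteq> 0" "a 2 \<noteq> 0"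
      | "a 0 \<noteq> 0" "a 1 = 0" "a 2 = 0" | "a 1 \<noteq> 0" "a 0 = 0" "a 2 = 0" | "a 2 \<noteq> 0" "a 0 = 0" "a 1 = 0"
      by blast
    then show thesis
    proof cases
      case 1
      then show thesis using simple[of 0 1 2] a012 L(3) True by simp
    next
      case 2
      then show thesis using simple[of 0 2 1] a012 L(2) True by simp
    next
      case 3
      then show thesis using simple[of 1 2 0] a012 L(1) True by simp
    qed (use True cases_4 double in metis)+
  qed
qed

definition special_points :: "(4 \<Rightarrow> complex) list" where
  "special_points = [double_point 0, double_point 1, double_point 2,
     simple_point 0 1, simple_point 0 2, simple_point 1 2, apex_point]"

definition special_quadrics :: "mpoly list" where
  "special_quadrics = map (Qpoly cubic) special_points"

lemma special_quadrics_explicit: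
  "special_quadrics =
    [mvar 0 ^ 2 - mconst (lam 0) * mvar 3 ^ 2,
     mvar 1 ^ 2 - mconst (lam 1) * mvar 3 ^ 2,
     mvar 2 ^ 2 - mconst (lam 2) * mvar 3 ^ 2,
     mconst (lam 1) * mvar 0 ^ 2 - mconst (lam 0) * mvar 1 ^ 2,
     mconst (lam 2) * mvar 0 ^ 2 - mconst (lam 0) * mvar 2 ^ 2,
     mconst (lam 2) * mvar 1 ^ 2 - mconst (lam 1) * mvar 2 ^ 2,
     mvar 3 * (mconst (2 * lam 0) * mvar 0 + mconst (2 * lam 1) * mvar 1
               + mconst (2 * lam 2) * mvar 2 - mvar 3)]"
  by (simp add: special_quadrics_def special_points_def Qpoly_cubic double_point_def
      simple_point_def apex_point_def lin_def mconst_mult mconst_uminus algebra_simps)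

lemma special_point_multiple:
  assumes nonzero: "a \<noteq> (\<lambda>_. 0)" and minors: "\<And>r c. minor3 (polar_matrix a lam) r c = 0"
  shows "\<exists>b\<in>set special_points. \<exists>c. c \<noteq> 0 \<and> a = (\<lambda>m. c * b m)"
  using nonzero minors
proof (cases rule: hess_point_cases)
  case apex
  then have "a 3 \<noteq> 0" using nonzero fun_eq_4I[of a "\<lambda>_. 0"] by auto
  moreover have "a = (\<lambda>m. (- 3 * a 3) * apex_point m)"
    using apex by (auto simp: apex_point_def)
  ultimately show ?thesis
    unfolding special_points_def by (intro bexI[of _ apex_point] exI[of _ "- 3 * a 3"]) auto
next
  case (double i)
  then have "a = (\<lambda>m. 3 * a i * double_point i m)"
    by (auto simp: double_point_def)
  moreover have "double_point i \<in> set special_points"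
    using cases_4[of i] \<open>i \<noteq> 3\<close> by (auto simp: special_points_def)
  ultimately show ?thesis
    using \<open>a i \<noteq> 0\<close> by (intro bexI[of _ "double_point i"] exI[of _ "3 * a i"]) auto
next
  case (simple i j k)
  then have ijk: "distinct [i, j, k, 3]" by auto
  then have lam: "lam j \<noteq> 0" by (simp add: lam_nonzero)
  have "a = (\<lambda>m. 3 * a i / lam j * simple_point i j m)"
  proof
    fix m
    show "a m = 3 * a i / lam j * simple_point i j m"
      using distinct_4_exhaust[OF ijk, of m] simple ijk lam
      by (auto simp: simple_point_def field_simps add_eq_0_iff)
  qed
  moreover have "simple_point i j \<in> set special_points"
    using simple(1) by (auto simp: special_points_def)
  ultimately show ?thesis
    using \<open>a i \<noteq> 0\<close> lam by (intro bexI[of _ "simple_point i j"] exI[of _ "3 * a i / lam j"]) auto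
qed

lemma hess_points_covered: "\<forall>Q\<in>hess_points cubic. \<exists>P\<in>set special_quadrics. proj_eq P Q"
proof
  fix Q assume "Q \<in> hess_points cubic"
  then obtain a where Q: "Q = Qpoly cubic a" "Q \<noteq> 0" "rank_le2 Q"
    unfolding hess_points_def Hspace_def by blast
  moreover have "Qpoly cubic (\<lambda>_. 0) = 0" by (simp add: Qpoly_def)
  ultimately have "a \<noteq> (\<lambda>_. 0)" and "\<And>r c. minor3 (polar_matrix a lam) r c = 0"
    using rank_le2_Qpoly_cubic by auto
  then obtain b c where "b \<in> set special_points" "c \<noteq> 0" "a = (\<lambda>m. c * b m)"
    using special_point_multiple by blast
  then show "\<exists>P\<in>set special_quadrics. proj_eq P Q"
    unfolding Q special_quadrics_def by (auto intro: proj_eq_Qpoly_scale)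
qed

lemma special_points_support:
  "map (\<lambda>a. {m. a m \<noteq> 0}) special_points = [{0}, {1}, {2}, {0, 1}, {0, 2}, {1, 2}, {3}]"
  using lam_nonzero[of 0] lam_nonzero[of 1] lam_nonzero[of 2]
  by (auto simp: special_points_def double_point_def simple_point_def apex_point_def)

lemma special_quadrics_pairwise_distinct:
  "\<forall>i<7. \<forall>j<7. i \<noteq> j \<longrightarrow> \<not> proj_eq (special_quadrics ! i) (special_quadrics ! j)"
proof (intro allI impI notI)
  fix i j :: nat
  assume ij: "i < 7" "j < 7" "i \<noteq> j" and "proj_eq (special_quadrics ! i) (special_quadrics ! j)"
  moreover have len: "length special_points = 7" by (simp add: special_points_def)
  ultimately have "proj_eq (Qpoly cubic (special_points ! i)) (Qpoly cubic (special_points ! j))"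
    by (simp add: special_quadrics_def)
  then obtain c where "c \<noteq> 0" "special_points ! j = (\<lambda>m. c * (special_points ! i) m)"
    by (rule proj_eq_Qpoly_cubicD)
  then have "{m. (special_points ! i) m \<noteq> 0} = {m. (special_points ! j) m \<noteq> 0}" by simp
  then have "map (\<lambda>a. {m. a m \<noteq> 0}) special_points ! i = map (\<lambda>a. {m. a m \<noteq> 0}) special_points ! j"
    using ij len by simp
  moreover have "distinct [{0}, {1}, {2}, {0, 1}, {0, 2}, {1, 2}, {3::4}]"
    by (auto simp: doubleton_eq_iff)
  ultimately show False
    using ij unfolding special_points_support by (simp add: nth_eq_iff_index_eq)
qed

lemma special_quadrics_in_hess_points: "set special_quadrics \<subseteq> hess_points cubic"
proof -
  have "a \<noteq> (\<lambda>_. 0) \<and> (\<forall>r c. minor3 (polar_matrix a lam) r c = 0)" if "a \<in> set special_points" for a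
  proof (intro conjI notI allI)
    assume "a = (\<lambda>_. 0)"
    then have "{m. a m \<noteq> 0} = {}" by simp
    then show False using that special_points_support by (auto simp: special_points_def)
  next
    show "minor3 (polar_matrix a lam) r c = 0" for r c
      using that minor3_double_point minor3_simple_point[of 0 1 2] minor3_simple_point[of 0 2 1]
        minor3_simple_point[of 1 2 0] minor3_apex_point
      by (auto simp: special_points_def)
  qed
  then show ?thesis
    unfolding special_quadrics_def using Qpoly_cubic_in_hess_points by auto
qed

lemma special_quadrics_double: "\<forall>i<3. hess_mult cubic (special_quadrics ! i) 2"
proof (intro allI impI)
  fix i :: nat
  assume "i < 3"
  then have "i = 0 \<or> i = 1 \<or> i = 2" by linarith
  then show "hess_mult cubic (special_quadrics ! i) 2"
    using hess_mult_double_point[of 0] hess_mult_double_point[of 1] hess_mult_double_point[of 2]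
    by (auto simp: special_quadrics_def special_points_def)
qed

lemma special_quadrics_simple: "\<forall>i. 3 \<le> i \<and> i < 7 \<longrightarrow> hess_mult cubic (special_quadrics ! i) 1"
proof (intro allI impI)
  fix i :: nat
  assume "3 \<le> i \<and> i < 7"
  then have "i = 3 \<or> i = 4 \<or> i = 5 \<or> i = 6" by linarith
  then show "hess_mult cubic (special_quadrics ! i) 1"
    using hess_mult_simple_point[of 0 1 2] hess_mult_simple_point[of 0 2 1]
      hess_mult_simple_point[of 1 2 0] hess_mult_apex_point
    by (auto simp: special_quadrics_def special_points_def)
qed

end

theorem mainTheorem5:
  fixes l0 l1 l2 :: complex and f :: mpoly and pts :: "mpoly list"
  assumes "l0 \<noteq> 0" and "l1 \<noteq> 0" and "l2 \<noteq> 0"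
    and "\<forall>r0 r1 r2. r0^2 = l0 \<and> r1^2 = l1 \<and> r2^2 = l2 \<longrightarrow> 2 * (r0^3 + r1^3 + r2^3) \<noteq> 1"
    and "f = mvar 0 ^ 3 + mvar 1 ^ 3 + mvar 2 ^ 3
             - mvar 3 ^ 2 * (mconst (3 * l0) * mvar 0 + mconst (3 * l1) * mvar 1
                             + mconst (3 * l2) * mvar 2 - mvar 3)"
    and "pts = [mvar 0 ^ 2 - mconst l0 * mvar 3 ^ 2,
                mvar 1 ^ 2 - mconst l1 * mvar 3 ^ 2,
                mvar 2 ^ 2 - mconst l2 * mvar 3 ^ 2,
                mconst l1 * mvar 0 ^ 2 - mconst l0 * mvar 1 ^ 2,
                mconst l2 * mvar 0 ^ 2 - mconst l0 * mvar 2 ^ 2,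
                mconst l2 * mvar 1 ^ 2 - mconst l1 * mvar 2 ^ 2,
                mvar 3 * (mconst (2 * l0) * mvar 0 + mconst (2 * l1) * mvar 1
                          + mconst (2 * l2) * mvar 2 - mvar 3)]"
  shows "(\<forall>i<7. \<forall>j<7. i \<noteq> j \<longrightarrow> \<not> proj_eq (pts ! i) (pts ! j))
       \<and> set pts \<subseteq> hess_points f
       \<and> (\<forall>Q\<in>hess_points f. \<exists>P\<in>set pts. proj_eq P Q)
       \<and> (\<forall>i<3. hess_mult f (pts ! i) 2)
       \<and> (\<forall>i. 3 \<le> i \<and> i < 7 \<longrightarrow> hess_mult f (pts ! i) 1)
       \<and> hessian_discriminant f"
proof -
  define lam :: "4 \<Rightarrow> complex" where "lam i = (if i = 0 then l0 else if i = 1 then l1 else l2)" for i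
  interpret lambda_cubic lam
    using assms(1-3) by unfold_locales (simp add: lam_def)
  have f: "f = cubic" and pts: "pts = special_quadrics"
    using assms(5,6) by (simp_all add: cubic_def special_quadrics_explicit lam_def)
  have "hessian_discriminant cubic"
    by (rule hessian_discriminant_if_few_points[OF hess_points_covered])
      (simp add: special_quadrics_def special_points_def)
  then show ?thesis
    unfolding f pts
    using special_quadrics_pairwise_distinct special_quadrics_in_hess_points hess_points_covered
      special_quadrics_double special_quadrics_simple by blast
qed
end
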